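(* For every regular language $L\subseteq\Sigma^*$, the nondeterministic state complexity $\mathrm{ns}(L)$ equals the least degree of any boolean representation of the free monoid $\Sigma^*$ that extends the canonical representation $\kappa_L\circ\mu_L\colon\Sigma^*\to\mathbf{JSL}(\mathrm{LQ}(L),\mathrm{LQ}(L))$, $w\mapsto(K\mapsto w^{-1}K)$.
   Context: $\mathrm{LQ}(L)$ is the finite semilattice (under $\subseteq$, join $=\cup$) of all finite unions, including $\emptyset$, of left derivatives $u^{-1}L=\{w:uw\in L\}$. For a finite semilattice $S$, $\mathbf{JSL}(S,S)$ is the set of join-preserving maps $S\to S$, a monoid under $f\cdot g:=g\circ f$. A boolean representation of a monoid $M$ is a finite semilattice $S$ with a monoid morphism $\rho\colon M\to\mathbf{JSL}(S,S)$; its degree is $|J(S)|$, the number of join-irreducible elements of $S$ ($j\ne\bot$ with $j=\bigvee X\Rightarrow j\in X$). An equivariant map $\rho_1\to\rho_2$ between representations on $S_1,S_2$ is a join-preserving $f\colon S_1\to S_2$ with $f(\rho_1(m)(s))=\rho_2(m)(f(s))$ for all $m,s$; $\rho_2$ extends $\rho_1$ if there is an injective equivariant map $\rho_1\to\rho_2$. $\mathrm{ns}(L)$ is the least number of states of an nfa (finite state set, transition relations, sets of initial and final states; several initial states allowed) accepting $L$. *)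

theory Defs
  imports Main
begin

definition is_nfa :: "'q set \<Rightarrow> ('q \<times> 'a \<times> 'q) set \<Rightarrow> 'q set \<Rightarrow> 'q set \<Rightarrow> bool" where
  "is_nfa Q T I F \<longleftrightarrow> finite Q \<and> T \<subseteq> Q \<times> UNIV \<times> Q \<and> I \<subseteq> Q \<and> F \<subseteq> Q"

definition nfa_steps :: "('q \<times> 'a \<times> 'q) set \<Rightarrow> 'q set \<Rightarrow> 'a list \<Rightarrow> 'q set" where
  "nfa_steps T P w = fold (\<lambda>a P. {q'. \<exists>q\<in>P. (q, a, q') \<in> T}) w P"

definition nfa_lang :: "('q \<times> 'a \<times> 'q) set \<Rightarrow> 'q set \<Rightarrow> 'q set \<Rightarrow> 'a list set" where
  "nfa_lang T I F = {w. nfa_steps T I w \<inter> F \<noteq> {}}"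

text \<open>States are taken from nat; every finite state set can be relabelled into nat.\<close>

definition regular :: "'a list set \<Rightarrow> bool" where
  "regular L \<longleftrightarrow> (\<exists>(Q::nat set) T I F. is_nfa Q T I F \<and> nfa_lang T I F = L)"

definition ns :: "'a list set \<Rightarrow> nat" where
  "ns L = (LEAST n. \<exists>(Q::nat set) T I F. is_nfa Q T I F \<and> card Q = n \<and> nfa_lang T I F = L)"

definition lderiv :: "'a list \<Rightarrow> 'a list set \<Rightarrow> 'a list set" where
  "lderiv u L = {w. u @ w \<in> L}"

definition LQ :: "'a list set \<Rightarrow> 'a list set set" where
  "LQ L = {\<Union>X | X. finite X \<and> X \<subseteq> range (\<lambda>u. lderiv u L)}"

definition fin_jsl :: "'b set \<Rightarrow> ('b \<Rightarrow> 'b \<Rightarrow> 'b) \<Rightarrow> 'b \<Rightarrow> bool" where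
  "fin_jsl S join bt \<longleftrightarrow> finite S \<and> bt \<in> S
     \<and> (\<forall>x\<in>S. \<forall>y\<in>S. join x y \<in> S)
     \<and> (\<forall>x\<in>S. \<forall>y\<in>S. \<forall>z\<in>S. join (join x y) z = join x (join y z))
     \<and> (\<forall>x\<in>S. \<forall>y\<in>S. join x y = join y x)
     \<and> (\<forall>x\<in>S. join x x = x)
     \<and> (\<forall>x\<in>S. join bt x = x)"

definition jsl_le :: "('b \<Rightarrow> 'b \<Rightarrow> 'b) \<Rightarrow> 'b \<Rightarrow> 'b \<Rightarrow> bool" where
  "jsl_le join x y \<longleftrightarrow> join x y = y"

definition is_join_of :: "'b set \<Rightarrow> ('b \<Rightarrow> 'b \<Rightarrow> 'b) \<Rightarrow> 'b set \<Rightarrow> 'b \<Rightarrow> bool" where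
  "is_join_of S join X j \<longleftrightarrow> j \<in> S \<and> (\<forall>x\<in>X. jsl_le join x j)
     \<and> (\<forall>u\<in>S. (\<forall>x\<in>X. jsl_le join x u) \<longrightarrow> jsl_le join j u)"

definition join_irreducibles :: "'b set \<Rightarrow> ('b \<Rightarrow> 'b \<Rightarrow> 'b) \<Rightarrow> 'b \<Rightarrow> 'b set" where
  "join_irreducibles S join bt =
     {j \<in> S. j \<noteq> bt \<and> (\<forall>X. X \<subseteq> S \<and> is_join_of S join X j \<longrightarrow> j \<in> X)}"

definition degree :: "'b set \<Rightarrow> ('b \<Rightarrow> 'b \<Rightarrow> 'b) \<Rightarrow> 'b \<Rightarrow> nat" where
  "degree S join bt = card (join_irreducibles S join bt)"

definition join_preserving ::
  "'b set \<Rightarrow> ('b \<Rightarrow> 'b \<Rightarrow> 'b) \<Rightarrow> 'b \<Rightarrow> 'c set \<Rightarrow> ('c \<Rightarrow> 'c \<Rightarrow> 'c) \<Rightarrow> 'c \<Rightarrow> ('b \<Rightarrow> 'c) \<Rightarrow> bool" where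
  "join_preserving S1 join1 bt1 S2 join2 bt2 f \<longleftrightarrow>
     (\<forall>x\<in>S1. f x \<in> S2) \<and> f bt1 = bt2 \<and>
     (\<forall>x\<in>S1. \<forall>y\<in>S1. f (join1 x y) = join2 (f x) (f y))"

text \<open>A monoid morphism rho from the free monoid (words, concatenation) to
 JSL(S,S) with multiplication f \<cdot> g = g \<circ> f: rho [] = id and
 rho (u @ v) = rho v \<circ> rho u (on S).\<close>
definition bool_rep :: "'b set \<Rightarrow> ('b \<Rightarrow> 'b \<Rightarrow> 'b) \<Rightarrow> 'b \<Rightarrow> ('a list \<Rightarrow> 'b \<Rightarrow> 'b) \<Rightarrow> bool" where
  "bool_rep S join bt \<rho> \<longleftrightarrow> fin_jsl S join bt
     \<and> (\<forall>w. join_preserving S join bt S join bt (\<rho> w))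
     \<and> (\<forall>x\<in>S. \<rho> [] x = x)
     \<and> (\<forall>u v. \<forall>x\<in>S. \<rho> (u @ v) x = \<rho> v (\<rho> u x))"

definition canon_rep :: "'a list set \<Rightarrow> 'a list \<Rightarrow> 'a list set \<Rightarrow> 'a list set" where
  "canon_rep L w K = lderiv w K"

definition equivariant ::
  "'b set \<Rightarrow> ('b \<Rightarrow> 'b \<Rightarrow> 'b) \<Rightarrow> 'b \<Rightarrow> ('a list \<Rightarrow> 'b \<Rightarrow> 'b) \<Rightarrow>
   'c set \<Rightarrow> ('c \<Rightarrow> 'c \<Rightarrow> 'c) \<Rightarrow> 'c \<Rightarrow> ('a list \<Rightarrow> 'c \<Rightarrow> 'c) \<Rightarrow> ('b \<Rightarrow> 'c) \<Rightarrow> bool" where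
  "equivariant S1 join1 bt1 \<rho>1 S2 join2 bt2 \<rho>2 f \<longleftrightarrow>
     join_preserving S1 join1 bt1 S2 join2 bt2 f \<and>
     (\<forall>m. \<forall>s\<in>S1. f (\<rho>1 m s) = \<rho>2 m (f s))"

definition extends_canon :: "'a list set \<Rightarrow> 'b set \<Rightarrow> ('b \<Rightarrow> 'b \<Rightarrow> 'b) \<Rightarrow> 'b \<Rightarrow> ('a list \<Rightarrow> 'b \<Rightarrow> 'b) \<Rightarrow> bool" where
  "extends_canon L S join bt \<rho> \<longleftrightarrow>
     (\<exists>f. inj_on f (LQ L) \<and> equivariant (LQ L) (\<union>) {} (canon_rep L) S join bt \<rho> f)"

end

(*
  Lower bound.  Let f embed LQ(L) equivariantly into S, put s = f L and c = f K0, where K0 is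
  the union of the quotients u^-1 L with u not in L.  Since the empty word lies in w^-1 L
  exactly when w is in L, injectivity of f gives: w is in L iff rho_w(s) is not below c.
  Take the nfa whose states are the join-irreducibles of S, with initial states those below s,
  final states those not below c, and a transition j -a-> j' whenever j' <= rho_a(j).  In a
  finite semilattice every element is the join of the join-irreducibles below it, and
  join-preserving maps preserve finite joins; so the states reached on w have join rho_w(s),
  and the nfa accepts exactly L.

  Upper bound.  For an nfa with state set Q accepting L, the languages accepted from subsets
  of Q form a finite family closed under unions and left quotients that contains LQ(L).  With
  quotients as the action it is a representation extending the canonical one, and each member
  is a union of the languages of single states, so at most |Q| members are join-irreducible.
*)

theory Submission
  imports Defs
begin

section \<open>Runs of nondeterministic automata\<close>

lemma nfa_steps_Nil [simp]: "nfa_steps T P [] = P"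
  by (simp add: nfa_steps_def)

lemma nfa_steps_Cons [simp]:
  "nfa_steps T P (a # w) = nfa_steps T {q'. \<exists>q\<in>P. (q, a, q') \<in> T} w"
  by (simp add: nfa_steps_def)

lemma nfa_steps_append: "nfa_steps T P (u @ v) = nfa_steps T (nfa_steps T P u) v"
  by (simp add: nfa_steps_def)

lemma nfa_steps_subset: "T \<subseteq> Q \<times> UNIV \<times> Q \<Longrightarrow> P \<subseteq> Q \<Longrightarrow> nfa_steps T P w \<subseteq> Q"
proof (induction w arbitrary: P)
  case (Cons a w)
  have "{q'. \<exists>q\<in>P. (q, a, q') \<in> T} \<subseteq> Q" using Cons.prems by blast
  then show ?case using Cons.IH Cons.prems(1) by simp
qed simp

lemma nfa_steps_empty [simp]: "nfa_steps T {} w = {}"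
  by (induction w) simp_all

lemma nfa_steps_UN: "nfa_steps T (\<Union>i\<in>A. P i) w = (\<Union>i\<in>A. nfa_steps T (P i) w)"
proof (induction w arbitrary: P)
  case (Cons a w)
  have "{q'. \<exists>q\<in>(\<Union>i\<in>A. P i). (q, a, q') \<in> T} = (\<Union>i\<in>A. {q'. \<exists>q\<in>P i. (q, a, q') \<in> T})"
    by blast
  then show ?case using Cons.IH by simp
qed simp

lemma nfa_lang_UN: "nfa_lang T (\<Union>i\<in>A. P i) F = (\<Union>i\<in>A. nfa_lang T (P i) F)"
  by (auto simp: nfa_lang_def nfa_steps_UN)

lemma nfa_lang_eq_UN_singletons: "nfa_lang T P F = (\<Union>q\<in>P. nfa_lang T {q} F)"
  using nfa_lang_UN[of T "\<lambda>q. {q}" P F] by simp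

lemma lderiv_nfa_lang: "lderiv u (nfa_lang T P F) = nfa_lang T (nfa_steps T P u) F"
  by (simp add: lderiv_def nfa_lang_def nfa_steps_append)

lemma nfa_steps_image:
  assumes "inj_on h Q" "T \<subseteq> Q \<times> UNIV \<times> Q" "P \<subseteq> Q"
  shows "nfa_steps ((\<lambda>(p, a, q). (h p, a, h q)) ` T) (h ` P) w = h ` nfa_steps T P w"
  using assms(3)
proof (induction w arbitrary: P)
  case (Cons a w)
  have "{q'. \<exists>q\<in>h ` P. (q, a, q') \<in> (\<lambda>(p, a, q). (h p, a, h q)) ` T}
      = h ` {q'. \<exists>q\<in>P. (q, a, q') \<in> T}"
  proof (intro equalityI subsetI)
    fix x assume "x \<in> {q'. \<exists>q\<in>h ` P. (q, a, q') \<in> (\<lambda>(p, a, q). (h p, a, h q)) ` T}"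
    then obtain p p' q where "p \<in> P" "(p', a, q) \<in> T" "h p = h p'" "x = h q" by auto
    moreover from this have "p = p'"
      using assms(1,2) Cons.prems by (meson SigmaD1 inj_onD subsetD)
    ultimately show "x \<in> h ` {q'. \<exists>q\<in>P. (q, a, q') \<in> T}" by blast
  next
    fix x assume "x \<in> h ` {q'. \<exists>q\<in>P. (q, a, q') \<in> T}"
    then obtain p q where "p \<in> P" "(p, a, q) \<in> T" "x = h q" by blast
    then show "x \<in> {q'. \<exists>q\<in>h ` P. (q, a, q') \<in> (\<lambda>(p, a, q). (h p, a, h q)) ` T}"
      by (auto intro!: bexI[of _ "h p"] image_eqI[of _ _ "(p, a, q)"])
  qed
  moreover have "{q'. \<exists>q\<in>P. (q, a, q') \<in> T} \<subseteq> Q" using assms(2) by blast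
  ultimately show ?case using Cons.IH by simp
qed simp

lemma ns_le_card:
  assumes "is_nfa (Q :: 'q set) T I F"
  shows "ns (nfa_lang T I F) \<le> card Q"
proof -
  have fin: "finite Q" and T: "T \<subseteq> Q \<times> UNIV \<times> Q" and IF: "I \<subseteq> Q" "F \<subseteq> Q"
    using assms by (auto simp: is_nfa_def)
  obtain h :: "'q \<Rightarrow> nat" where h: "inj_on h Q"
    using fin finite_imp_inj_to_nat_seg by blast
  define T' where "T' = (\<lambda>(p, a, q). (h p, a, h q)) ` T"
  have "nfa_steps T' (h ` I) w \<inter> h ` F = h ` (nfa_steps T I w \<inter> F)" for w
    using nfa_steps_image[OF h T IF(1)] inj_on_image_Int[OF h nfa_steps_subset[OF T IF(1)] IF(2)]
    by (simp add: T'_def)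
  then have "nfa_lang T' (h ` I) (h ` F) = nfa_lang T I F"
    by (auto simp: nfa_lang_def)
  moreover have "is_nfa (h ` Q) T' (h ` I) (h ` F)"
    using fin T IF by (auto simp: is_nfa_def T'_def)
  ultimately show ?thesis
    unfolding ns_def using card_image[OF h] by (intro Least_le) blast
qed

lemma ns_attained:
  assumes "regular L"
  shows "\<exists>(Q :: nat set) T I F. is_nfa Q T I F \<and> card Q = ns L \<and> nfa_lang T I F = L"
proof -
  have "\<exists>n. \<exists>(Q :: nat set) T I F. is_nfa Q T I F \<and> card Q = n \<and> nfa_lang T I F = L"
    using assms unfolding regular_def by blast
  then show ?thesis unfolding ns_def by (rule LeastI_ex)
qed

section \<open>Left quotients and union-closed families of languages\<close>

lemma lderiv_Nil [simp]: "lderiv [] K = K"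
  by (simp add: lderiv_def)

lemma lderiv_append: "lderiv (u @ v) K = lderiv v (lderiv u K)"
  by (simp add: lderiv_def)

lemma lderiv_empty [simp]: "lderiv w {} = {}"
  by (simp add: lderiv_def)

lemma lderiv_Un: "lderiv w (A \<union> B) = lderiv w A \<union> lderiv w B"
  by (auto simp: lderiv_def)

lemma lderiv_in_LQ: "lderiv u L \<in> LQ L"
  unfolding LQ_def by (auto intro!: exI[of _ "{lderiv u L}"])

lemma Un_in_LQ:
  assumes "A \<in> LQ L" "B \<in> LQ L"
  shows "A \<union> B \<in> LQ L"
proof -
  obtain X Y where "A = \<Union>X" "B = \<Union>Y" "finite X" "finite Y"
    "X \<subseteq> range (\<lambda>u. lderiv u L)" "Y \<subseteq> range (\<lambda>u. lderiv u L)"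
    using assms unfolding LQ_def by blast
  then have "A \<union> B = \<Union>(X \<union> Y) \<and> finite (X \<union> Y) \<and> X \<union> Y \<subseteq> range (\<lambda>u. lderiv u L)"
    by auto
  then show ?thesis unfolding LQ_def by blast
qed

lemma jsl_le_Un_iff [simp]: "jsl_le (\<union>) A B \<longleftrightarrow> A \<subseteq> B"
  by (auto simp: jsl_le_def)

lemma is_join_of_Union: "X \<subseteq> SL \<Longrightarrow> \<Union>X \<in> SL \<Longrightarrow> is_join_of SL (\<union>) X (\<Union>X)"
  by (auto simp: is_join_of_def)

lemma join_irreducibles_subset:
  assumes "\<And>s. s \<in> S \<Longrightarrow> \<exists>X\<subseteq>G. X \<subseteq> S \<and> is_join_of S join X s"
  shows "join_irreducibles S join bt \<subseteq> G"
  using assms unfolding join_irreducibles_def by blast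

lemma bool_rep_lderiv:
  assumes "finite SL" "{} \<in> SL" "\<And>A B. A \<in> SL \<Longrightarrow> B \<in> SL \<Longrightarrow> A \<union> B \<in> SL"
    and "\<And>A w. A \<in> SL \<Longrightarrow> lderiv w A \<in> SL"
  shows "bool_rep SL (\<union>) {} lderiv"
  using assms by (auto simp: bool_rep_def fin_jsl_def join_preserving_def lderiv_Un lderiv_append)

lemma extends_canon_lderiv:
  assumes "LQ L \<subseteq> SL"
  shows "extends_canon L SL (\<union>) {} lderiv"
  unfolding extends_canon_def equivariant_def join_preserving_def canon_rep_def
  using assms by (intro exI[of _ id]) auto

definition state_lang_unions :: "('q \<times> 'a \<times> 'q) set \<Rightarrow> 'q set \<Rightarrow> 'q set \<Rightarrow> 'a list set set" where
  "state_lang_unions T F Q = (\<lambda>P. nfa_lang T P F) ` Pow Q"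

context
  fixes Q :: "'q set" and T :: "('q \<times> 'a \<times> 'q) set" and I F :: "'q set"
  assumes nfa: "is_nfa Q T I F"
begin

lemma finite_state_lang_unions: "finite (state_lang_unions T F Q)"
  using nfa by (simp add: state_lang_unions_def is_nfa_def)

lemma nfa_steps_subset_states: "P \<subseteq> Q \<Longrightarrow> nfa_steps T P w \<subseteq> Q"
  using nfa by (simp add: is_nfa_def nfa_steps_subset)

lemma bool_rep_state_lang_unions: "bool_rep (state_lang_unions T F Q) (\<union>) {} lderiv"
proof (rule bool_rep_lderiv[OF finite_state_lang_unions])
  show "{} \<in> state_lang_unions T F Q"
    unfolding state_lang_unions_def by (auto simp: nfa_lang_def intro!: image_eqI[of _ _ "{}"])
  fix A B assume "A \<in> state_lang_unions T F Q" "B \<in> state_lang_unions T F Q"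
  then show "A \<union> B \<in> state_lang_unions T F Q"
    unfolding state_lang_unions_def
    using nfa_lang_UN[of T id "{_, _}" F] by (auto intro!: image_eqI[where x = "_ \<union> _"])
next
  fix A w assume "A \<in> state_lang_unions T F Q"
  then show "lderiv w A \<in> state_lang_unions T F Q"
    using nfa_steps_subset_states unfolding state_lang_unions_def by (auto simp: lderiv_nfa_lang)
qed

lemma LQ_subset_state_lang_unions: "LQ (nfa_lang T I F) \<subseteq> state_lang_unions T F Q"
proof
  fix K assume "K \<in> LQ (nfa_lang T I F)"
  then obtain U where K: "K = (\<Union>u\<in>U. lderiv u (nfa_lang T I F))"
    unfolding LQ_def by (auto simp: subset_image_iff)
  also have "\<dots> = nfa_lang T (\<Union>u\<in>U. nfa_steps T I u) F"
    by (simp add: lderiv_nfa_lang nfa_lang_UN)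
  also have "\<dots> \<in> state_lang_unions T F Q"
    using nfa nfa_steps_subset_states unfolding state_lang_unions_def is_nfa_def by blast
  finally show "K \<in> state_lang_unions T F Q" .
qed

lemma degree_state_lang_unions: "degree (state_lang_unions T F Q) (\<union>) {} \<le> card Q"
proof -
  let ?q = "\<lambda>q. nfa_lang T {q} F"
  have "join_irreducibles (state_lang_unions T F Q) (\<union>) {} \<subseteq> ?q ` Q"
  proof (rule join_irreducibles_subset)
    fix s assume s: "s \<in> state_lang_unions T F Q"
    then obtain P where P: "P \<subseteq> Q" "s = nfa_lang T P F"
      unfolding state_lang_unions_def by blast
    have s_eq: "s = \<Union>(?q ` P)"
      unfolding P(2) by (rule nfa_lang_eq_UN_singletons)
    have sub: "?q ` P \<subseteq> state_lang_unions T F Q"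
      using P(1) unfolding state_lang_unions_def by blast
    show "\<exists>X\<subseteq>?q ` Q. X \<subseteq> state_lang_unions T F Q
        \<and> is_join_of (state_lang_unions T F Q) (\<union>) X s"
    proof (intro exI conjI)
      show "?q ` P \<subseteq> ?q ` Q" using P(1) by (rule image_mono)
      show "is_join_of (state_lang_unions T F Q) (\<union>) (?q ` P) s"
        using is_join_of_Union[OF sub] s unfolding s_eq by simp
    qed (fact sub)
  qed
  moreover have "finite Q" using nfa by (simp add: is_nfa_def)
  ultimately have "degree (state_lang_unions T F Q) (\<union>) {} \<le> card (?q ` Q)"
    unfolding degree_def by (simp add: card_mono)
  also have "\<dots> \<le> card Q" by (rule card_image_le) fact
  finally show ?thesis .
qed

end

lemma finite_LQ:
  assumes "regular L"
  shows "finite (LQ L)"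
proof -
  obtain Q :: "nat set" and T I F where "is_nfa Q T I F" "nfa_lang T I F = L"
    using assms unfolding regular_def by blast
  then show ?thesis
    using finite_state_lang_unions LQ_subset_state_lang_unions finite_subset by metis
qed

section \<open>Finite join-semilattices\<close>

locale finite_jsl =
  fixes S :: "'b set" and join :: "'b \<Rightarrow> 'b \<Rightarrow> 'b" and bt :: 'b
  assumes fin_jsl: "fin_jsl S join bt"
begin

abbreviation leq :: "'b \<Rightarrow> 'b \<Rightarrow> bool" (infix "\<preceq>" 50)
  where "x \<preceq> y \<equiv> jsl_le join x y"

abbreviation JI :: "'b set"
  where "JI \<equiv> join_irreducibles S join bt"

lemma finite_carrier: "finite S"
  and bt_in: "bt \<in> S"
  and join_closed: "x \<in> S \<Longrightarrow> y \<in> S \<Longrightarrow> join x y \<in> S"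
  and join_assoc: "x \<in> S \<Longrightarrow> y \<in> S \<Longrightarrow> z \<in> S \<Longrightarrow> join (join x y) z = join x (join y z)"
  and join_commute: "x \<in> S \<Longrightarrow> y \<in> S \<Longrightarrow> join x y = join y x"
  and join_idem: "x \<in> S \<Longrightarrow> join x x = x"
  and bt_join: "x \<in> S \<Longrightarrow> join bt x = x"
  using fin_jsl unfolding fin_jsl_def by blast+

lemma JI_subset: "JI \<subseteq> S"
  by (auto simp: join_irreducibles_def)

lemma leq_refl: "x \<in> S \<Longrightarrow> x \<preceq> x"
  by (simp add: jsl_le_def join_idem)

lemma bt_leq: "x \<in> S \<Longrightarrow> bt \<preceq> x"
  by (simp add: jsl_le_def bt_join)

lemma leq_antisym: "x \<in> S \<Longrightarrow> y \<in> S \<Longrightarrow> x \<preceq> y \<Longrightarrow> y \<preceq> x \<Longrightarrow> x = y"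
  using join_commute[of x y] by (simp add: jsl_le_def)

lemma leq_trans: "x \<in> S \<Longrightarrow> y \<in> S \<Longrightarrow> z \<in> S \<Longrightarrow> x \<preceq> y \<Longrightarrow> y \<preceq> z \<Longrightarrow> x \<preceq> z"
  using join_assoc[of x y z] by (simp add: jsl_le_def)

lemma leq_join1: "x \<in> S \<Longrightarrow> y \<in> S \<Longrightarrow> x \<preceq> join x y"
  using join_assoc[of x x y] join_idem[of x] by (simp add: jsl_le_def)

lemma leq_join2: "x \<in> S \<Longrightarrow> y \<in> S \<Longrightarrow> y \<preceq> join x y"
  using leq_join1[of y x] join_commute[of x y] by simp

lemma join_leq_iff:
  assumes "x \<in> S" "y \<in> S" "u \<in> S"
  shows "join x y \<preceq> u \<longleftrightarrow> x \<preceq> u \<and> y \<preceq> u"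
proof
  assume "join x y \<preceq> u"
  then show "x \<preceq> u \<and> y \<preceq> u"
    using assms join_closed leq_join1 leq_join2 leq_trans by blast
next
  assume "x \<preceq> u \<and> y \<preceq> u"
  then show "join x y \<preceq> u"
    using assms join_assoc[of x y u] by (simp add: jsl_le_def)
qed

definition is_lub :: "'b set \<Rightarrow> 'b \<Rightarrow> bool"
  where "is_lub R t \<longleftrightarrow> t \<in> S \<and> (\<forall>u\<in>S. t \<preceq> u \<longleftrightarrow> (\<forall>x\<in>R. x \<preceq> u))"

lemma is_lub_in: "is_lub R t \<Longrightarrow> t \<in> S"
  by (simp add: is_lub_def)

lemma is_lub_leq_iff: "is_lub R t \<Longrightarrow> u \<in> S \<Longrightarrow> t \<preceq> u \<longleftrightarrow> (\<forall>x\<in>R. x \<preceq> u)"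
  by (simp add: is_lub_def)

lemma is_lub_upper: "is_lub R t \<Longrightarrow> x \<in> R \<Longrightarrow> x \<preceq> t"
  using is_lub_leq_iff[of R t t] is_lub_in leq_refl by blast

lemma is_lub_unique: "is_lub R t \<Longrightarrow> is_lub R t' \<Longrightarrow> t = t'"
  by (meson is_lub_in is_lub_leq_iff is_lub_upper leq_antisym)

lemma is_lub_empty: "is_lub {} bt"
  by (simp add: is_lub_def bt_in bt_leq)

lemma is_lub_insert: "is_lub R t \<Longrightarrow> x \<in> S \<Longrightarrow> is_lub (insert x R) (join x t)"
  unfolding is_lub_def by (simp add: join_closed join_leq_iff)

lemma ex_is_lub: "finite R \<Longrightarrow> R \<subseteq> S \<Longrightarrow> \<exists>t. is_lub R t"
  by (induction R rule: finite_induct) (auto intro: is_lub_empty is_lub_insert)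

lemma is_lub_UN:
  assumes "\<And>x. x \<in> R \<Longrightarrow> is_lub (A x) (h x)" "is_lub (h ` R) t"
  shows "is_lub (\<Union>x\<in>R. A x) t"
  unfolding is_lub_def
proof (intro conjI ballI)
  show "t \<in> S" using assms(2) by (rule is_lub_in)
  fix u assume u: "u \<in> S"
  have "t \<preceq> u \<longleftrightarrow> (\<forall>x\<in>R. h x \<preceq> u)"
    using is_lub_leq_iff[OF assms(2) u] by simp
  also have "\<dots> \<longleftrightarrow> (\<forall>x\<in>R. \<forall>y\<in>A x. y \<preceq> u)"
    using is_lub_leq_iff[OF assms(1) u] by (rule ball_cong[OF refl])
  finally show "t \<preceq> u \<longleftrightarrow> (\<forall>y\<in>(\<Union>x\<in>R. A x). y \<preceq> u)"
    by blast
qed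

lemma is_lub_superset:
  assumes "is_lub R t" "R \<subseteq> R'" "R' \<subseteq> S" "\<And>x. x \<in> R' \<Longrightarrow> x \<preceq> t"
  shows "is_lub R' t"
  unfolding is_lub_def
proof (intro conjI ballI)
  show t: "t \<in> S" using assms(1) by (rule is_lub_in)
  fix u assume u: "u \<in> S"
  show "t \<preceq> u \<longleftrightarrow> (\<forall>x\<in>R'. x \<preceq> u)"
  proof
    assume "t \<preceq> u"
    then show "\<forall>x\<in>R'. x \<preceq> u" using assms(3,4) t u leq_trans by blast
  next
    assume "\<forall>x\<in>R'. x \<preceq> u"
    then show "t \<preceq> u" using assms(1,2) u is_lub_leq_iff by blast
  qed
qed

lemma is_join_of_iff_is_lub:
  assumes "X \<subseteq> S"
  shows "is_join_of S join X j \<longleftrightarrow> is_lub X j"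
proof
  assume j: "is_join_of S join X j"
  show "is_lub X j"
    unfolding is_lub_def
  proof (intro conjI ballI)
    show "j \<in> S" using j by (simp add: is_join_of_def)
    fix u assume u: "u \<in> S"
    show "j \<preceq> u \<longleftrightarrow> (\<forall>x\<in>X. x \<preceq> u)"
      using j u assms leq_trans unfolding is_join_of_def by blast
  qed
next
  assume "is_lub X j"
  then show "is_join_of S join X j"
    unfolding is_join_of_def using is_lub_in is_lub_upper is_lub_leq_iff by blast
qed

lemma join_preserving_is_lub:
  assumes g: "join_preserving S join bt S join bt g"
  shows "finite R \<Longrightarrow> R \<subseteq> S \<Longrightarrow> is_lub R t \<Longrightarrow> is_lub (g ` R) (g t)"
proof (induction R arbitrary: t rule: finite_induct)
  case empty
  then have "t = bt" using is_lub_empty is_lub_unique by blast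
  then show ?case using g is_lub_empty by (simp add: join_preserving_def)
next
  case (insert x R)
  obtain t0 where t0: "is_lub R t0" using ex_is_lub insert by blast
  have "t = join x t0"
    using is_lub_unique[OF insert.prems(2) is_lub_insert[OF t0]] insert.prems(1) by simp
  then have "g t = join (g x) (g t0)"
    using g insert.prems(1) is_lub_in[OF t0] by (simp add: join_preserving_def)
  moreover have "is_lub (g ` R) (g t0)" using insert t0 by simp
  ultimately show ?case
    using is_lub_insert g insert.prems(1) by (simp add: join_preserving_def)
qed

lemma is_lub_join_irreducibles_below:
  "s \<in> S \<Longrightarrow> is_lub {j \<in> JI. j \<preceq> s} s"
proof (induction "card {t \<in> S. t \<preceq> s \<and> t \<noteq> s}" arbitrary: s rule: less_induct)
  case (less s)
  consider "s = bt" | "s \<in> JI" | "s \<noteq> bt" "s \<notin> JI" by blast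
  then show ?case
  proof cases
    case 1
    have "j = bt" if "j \<in> JI" "j \<preceq> bt" for j
      using that JI_subset bt_in bt_leq[of j] leq_antisym[of j bt] by blast
    then have none: "{j \<in> JI. j \<preceq> s} = {}"
      using 1 by (auto simp: join_irreducibles_def)
    have "is_lub {j \<in> JI. j \<preceq> s} bt" unfolding none by (rule is_lub_empty)
    then show ?thesis using 1 by simp
  next
    case 2
    have "is_lub {s} s" using less.prems leq_refl by (simp add: is_lub_def)
    then show ?thesis
      by (rule is_lub_superset) (use 2 less.prems JI_subset leq_refl in auto)
  next
    case 3
    then have "\<not> (\<forall>X. X \<subseteq> S \<and> is_join_of S join X s \<longrightarrow> s \<in> X)"
      using less.prems by (simp add: join_irreducibles_def)
    then obtain X where X: "X \<subseteq> S" "is_join_of S join X s" "s \<notin> X"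
      by blast
    have s_lub: "is_lub X s" using X(1,2) by (simp add: is_join_of_iff_is_lub)
    have "is_lub {j \<in> JI. j \<preceq> x} x" if x: "x \<in> X" for x
    proof (rule less.hyps)
      show xS: "x \<in> S" using x X by auto
      have xs: "x \<preceq> s" "x \<noteq> s"
        using is_lub_upper[OF s_lub x] x X(3) by blast+
      have "{t \<in> S. t \<preceq> x \<and> t \<noteq> x} \<subseteq> {t \<in> S. t \<preceq> s \<and> t \<noteq> s}"
      proof (intro subsetI CollectI conjI)
        fix t assume t: "t \<in> {t \<in> S. t \<preceq> x \<and> t \<noteq> x}"
        then show "t \<in> S" by blast
        show ts: "t \<preceq> s" using t xS xs(1) less.prems leq_trans[of t x s] by blast
        show "t \<noteq> s"
        proof
          assume "t = s"
          then have "s \<preceq> x" using t by blast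
          then show False using xs xS less.prems leq_antisym[of x s] by blast
        qed
      qed
      moreover have "x \<in> {t \<in> S. t \<preceq> s \<and> t \<noteq> s} - {t \<in> S. t \<preceq> x \<and> t \<noteq> x}"
        using xS xs by simp
      ultimately have "{t \<in> S. t \<preceq> x \<and> t \<noteq> x} \<subset> {t \<in> S. t \<preceq> s \<and> t \<noteq> s}"
        by blast
      then show "card {t \<in> S. t \<preceq> x \<and> t \<noteq> x} < card {t \<in> S. t \<preceq> s \<and> t \<noteq> s}"
        using finite_carrier by (simp add: psubset_card_mono)
    qed
    then have "is_lub (\<Union>x\<in>X. {j \<in> JI. j \<preceq> x}) s"
      using is_lub_UN[of X _ id s] s_lub by simp
    then show ?thesis
    proof (rule is_lub_superset)
      show "(\<Union>x\<in>X. {j \<in> JI. j \<preceq> x}) \<subseteq> {j \<in> JI. j \<preceq> s}"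
      proof clarify
        fix j x assume "x \<in> X" "j \<in> JI" "j \<preceq> x"
        then show "j \<preceq> s"
          using X(1) JI_subset less.prems is_lub_upper[OF s_lub] leq_trans[of j x s] by blast
      qed
    qed (use JI_subset in auto)
  qed
qed

definition jirr_trans :: "('a list \<Rightarrow> 'b \<Rightarrow> 'b) \<Rightarrow> ('b \<times> 'a \<times> 'b) set"
  where "jirr_trans \<rho> = {(j, a, j'). j \<in> JI \<and> j' \<in> JI \<and> j' \<preceq> \<rho> [a] j}"

lemma is_lub_nfa_steps_jirr_trans:
  assumes \<rho>: "bool_rep S join bt \<rho>"
  shows "R \<subseteq> JI \<Longrightarrow> is_lub R s \<Longrightarrow> is_lub (nfa_steps (jirr_trans \<rho>) R w) (\<rho> w s)"
proof (induction w arbitrary: R s)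
  case Nil
  then show ?case using \<rho> is_lub_in by (simp add: bool_rep_def)
next
  case (Cons a w)
  let ?R' = "{j'. \<exists>j\<in>R. (j, a, j') \<in> jirr_trans \<rho>}"
  have pres: "join_preserving S join bt S join bt (\<rho> [a])"
    using \<rho> by (simp add: bool_rep_def)
  then have into: "\<rho> [a] x \<in> S" if "x \<in> S" for x
    using that by (simp add: join_preserving_def)
  have R': "?R' = (\<Union>j\<in>R. {j' \<in> JI. j' \<preceq> \<rho> [a] j})"
    using Cons.prems(1) by (auto simp: jirr_trans_def)
  have "is_lub ?R' (\<rho> [a] s)"
    unfolding R'
  proof (rule is_lub_UN)
    show "is_lub {j' \<in> JI. j' \<preceq> \<rho> [a] j} (\<rho> [a] j)" if "j \<in> R" for j
      using that Cons.prems(1) JI_subset into by (intro is_lub_join_irreducibles_below) blast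
    have "R \<subseteq> S" using Cons.prems(1) JI_subset by blast
    then show "is_lub (\<rho> [a] ` R) (\<rho> [a] s)"
      using finite_subset[OF _ finite_carrier] Cons.prems(2) by (intro join_preserving_is_lub[OF pres])
  qed
  moreover have "?R' \<subseteq> JI" by (auto simp: jirr_trans_def)
  ultimately have "is_lub (nfa_steps (jirr_trans \<rho>) ?R' w) (\<rho> w (\<rho> [a] s))"
    using Cons.IH by blast
  moreover have "\<rho> ([a] @ w) s = \<rho> w (\<rho> [a] s)"
    using \<rho> is_lub_in[OF Cons.prems(2)] unfolding bool_rep_def by blast
  ultimately show ?case by simp
qed

lemma ns_le_degree:
  assumes \<rho>: "bool_rep S join bt \<rho>" and "s \<in> S" "c \<in> S"
  shows "ns {w. \<not> \<rho> w s \<preceq> c} \<le> degree S join bt"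
proof -
  let ?T = "jirr_trans \<rho>" and ?I = "{j \<in> JI. j \<preceq> s}" and ?F = "{j \<in> JI. \<not> j \<preceq> c}"
  have T: "?T \<subseteq> JI \<times> UNIV \<times> JI" by (auto simp: jirr_trans_def)
  have "finite JI" using JI_subset finite_carrier by (rule finite_subset)
  with T have nfa: "is_nfa JI ?T ?I ?F" unfolding is_nfa_def by blast
  have "nfa_lang ?T ?I ?F = {w. \<not> \<rho> w s \<preceq> c}"
  proof (rule set_eqI)
    fix w
    have "is_lub (nfa_steps ?T ?I w) (\<rho> w s)"
      by (rule is_lub_nfa_steps_jirr_trans[OF \<rho> _ is_lub_join_irreducibles_below[OF assms(2)]])
        blast
    moreover have "nfa_steps ?T ?I w \<subseteq> JI" using T by (rule nfa_steps_subset) blast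
    ultimately show "w \<in> nfa_lang ?T ?I ?F \<longleftrightarrow> w \<in> {w. \<not> \<rho> w s \<preceq> c}"
      using is_lub_leq_iff[OF _ assms(3)] by (auto simp: nfa_lang_def)
  qed
  then show ?thesis
    using ns_le_card[OF nfa] unfolding degree_def by simp
qed

end

section \<open>Extensions of the canonical representation\<close>

lemma lang_eq_of_extends_canon:
  assumes "regular L" and "extends_canon L S join bt \<rho>"
  shows "\<exists>s\<in>S. \<exists>c\<in>S. L = {w. \<not> jsl_le join (\<rho> w s) c}"
proof -
  obtain f where inj: "inj_on f (LQ L)"
    and eqv: "equivariant (LQ L) (\<union>) {} (canon_rep L) S join bt \<rho> f"
    using assms(2) unfolding extends_canon_def by blast
  have f_in: "f K \<in> S" if "K \<in> LQ L" for K
    using eqv that by (simp add: equivariant_def join_preserving_def)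
  have f_Un: "f (A \<union> B) = join (f A) (f B)" if "A \<in> LQ L" "B \<in> LQ L" for A B
    using eqv that by (simp add: equivariant_def join_preserving_def)
  have f_lderiv: "f (lderiv w K) = \<rho> w (f K)" if "K \<in> LQ L" for w K
    using eqv that by (simp add: equivariant_def canon_rep_def)
  define K0 where "K0 = (\<Union>u\<in>-L. lderiv u L)"
  have "(\<lambda>u. lderiv u L) ` (-L) \<subseteq> LQ L"
    using lderiv_in_LQ by blast
  then have "finite ((\<lambda>u. lderiv u L) ` (-L))"
    using finite_LQ[OF assms(1)] by (rule finite_subset)
  then have K0: "K0 \<in> LQ L"
    unfolding K0_def LQ_def by blast
  have L: "L \<in> LQ L"
    using lderiv_in_LQ[of "[]" L] by simp
  have "w \<in> L \<longleftrightarrow> \<not> lderiv w L \<subseteq> K0" for w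
  proof
    assume "w \<in> L"
    then have "[] \<in> lderiv w L" by (simp add: lderiv_def)
    moreover have "[] \<notin> K0" by (simp add: K0_def lderiv_def)
    ultimately show "\<not> lderiv w L \<subseteq> K0" by blast
  qed (auto simp: K0_def)
  moreover have "jsl_le join (\<rho> w (f L)) (f K0) \<longleftrightarrow> lderiv w L \<subseteq> K0" for w
  proof -
    have "jsl_le join (\<rho> w (f L)) (f K0) \<longleftrightarrow> f (lderiv w L \<union> K0) = f K0"
      by (simp add: jsl_le_def f_lderiv[OF L, symmetric] f_Un[OF lderiv_in_LQ K0])
    also have "\<dots> \<longleftrightarrow> lderiv w L \<union> K0 = K0"
      using inj_on_eq_iff[OF inj Un_in_LQ[OF lderiv_in_LQ K0] K0] .
    finally show ?thesis by blast
  qed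
  ultimately show ?thesis
    using f_in L K0 by blast
qed

lemma ns_le_degree_of_extension:
  assumes "regular L" "bool_rep S join bt \<rho>" "extends_canon L S join bt \<rho>"
  shows "ns L \<le> degree S join bt"
proof -
  interpret finite_jsl S join bt
    using assms(2) by unfold_locales (simp add: bool_rep_def)
  obtain s c where "s \<in> S" "c \<in> S" "L = {w. \<not> \<rho> w s \<preceq> c}"
    using lang_eq_of_extends_canon[OF assms(1,3)] by blast
  then show ?thesis using ns_le_degree[OF assms(2)] by simp
qed

section \<open>Relabelling the carrier of a representation\<close>

definition relabel_join :: "'b set \<Rightarrow> ('b \<Rightarrow> 'c) \<Rightarrow> ('b \<Rightarrow> 'b \<Rightarrow> 'b) \<Rightarrow> 'c \<Rightarrow> 'c \<Rightarrow> 'c"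
  where "relabel_join S e join x y = e (join (inv_into S e x) (inv_into S e y))"

definition relabel_rep :: "'b set \<Rightarrow> ('b \<Rightarrow> 'c) \<Rightarrow> ('m \<Rightarrow> 'b \<Rightarrow> 'b) \<Rightarrow> 'm \<Rightarrow> 'c \<Rightarrow> 'c"
  where "relabel_rep S e \<rho> w x = e (\<rho> w (inv_into S e x))"

context
  fixes S :: "'b set" and e :: "'b \<Rightarrow> 'c"
  assumes inj: "inj_on e S"
begin

lemma relabel_join_image [simp]:
  "x \<in> S \<Longrightarrow> y \<in> S \<Longrightarrow> relabel_join S e join (e x) (e y) = e (join x y)"
  using inj by (simp add: relabel_join_def)

lemma relabel_rep_image [simp]: "x \<in> S \<Longrightarrow> relabel_rep S e \<rho> w (e x) = e (\<rho> w x)"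
  using inj by (simp add: relabel_rep_def)

lemma fin_jsl_relabel:
  assumes "fin_jsl S join bt"
  shows "fin_jsl (e ` S) (relabel_join S e join) (e bt)"
proof -
  have closed: "\<And>x y. x \<in> S \<Longrightarrow> y \<in> S \<Longrightarrow> join x y \<in> S"
    and assoc: "\<And>x y z. x \<in> S \<Longrightarrow> y \<in> S \<Longrightarrow> z \<in> S \<Longrightarrow> join (join x y) z = join x (join y z)"
    and commute: "\<forall>x\<in>S. \<forall>y\<in>S. join x y = join y x"
    and props: "finite S" "bt \<in> S" "\<forall>x\<in>S. join x x = x" "\<forall>x\<in>S. join bt x = x"
    using assms unfolding fin_jsl_def by blast+
  show ?thesis
    unfolding fin_jsl_def
  proof (intro conjI)
    show "\<forall>x\<in>e ` S. \<forall>y\<in>e ` S. relabel_join S e join x y = relabel_join S e join y x"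
      using commute by simp
  qed (use closed assoc props in simp_all)
qed

lemma jsl_le_relabel:
  assumes "fin_jsl S join bt" "x \<in> S" "y \<in> S"
  shows "jsl_le (relabel_join S e join) (e x) (e y) \<longleftrightarrow> jsl_le join x y"
  using assms inj by (simp add: jsl_le_def fin_jsl_def inj_on_eq_iff)

lemma bool_rep_relabel:
  assumes "bool_rep S join bt \<rho>"
  shows "bool_rep (e ` S) (relabel_join S e join) (e bt) (relabel_rep S e \<rho>)"
proof -
  have jsl: "fin_jsl S join bt" and pres: "\<And>w. join_preserving S join bt S join bt (\<rho> w)"
    using assms by (simp_all add: bool_rep_def)
  have "\<And>x y. x \<in> S \<Longrightarrow> y \<in> S \<Longrightarrow> join x y \<in> S" "bt \<in> S"
    using jsl by (simp_all add: fin_jsl_def)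
  moreover have "\<And>w x. x \<in> S \<Longrightarrow> \<rho> w x \<in> S"
    using pres by (simp add: join_preserving_def)
  ultimately show ?thesis
    using assms fin_jsl_relabel[OF jsl] by (simp add: bool_rep_def join_preserving_def)
qed

lemma extends_canon_relabel:
  assumes "extends_canon L S join bt \<rho>"
  shows "extends_canon L (e ` S) (relabel_join S e join) (e bt) (relabel_rep S e \<rho>)"
proof -
  obtain f where f: "inj_on f (LQ L)" "equivariant (LQ L) (\<union>) {} (canon_rep L) S join bt \<rho> f"
    using assms unfolding extends_canon_def by blast
  then have "f ` LQ L \<subseteq> S"
    by (auto simp: equivariant_def join_preserving_def)
  then have "inj_on (e \<circ> f) (LQ L)"
    using f(1) inj by (simp add: comp_inj_on inj_on_subset)
  moreover have "equivariant (LQ L) (\<union>) {} (canon_rep L) (e ` S) (relabel_join S e join) (e bt)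
      (relabel_rep S e \<rho>) (e \<circ> f)"
    using f(2) by (simp add: equivariant_def join_preserving_def)
  ultimately show ?thesis
    unfolding extends_canon_def by blast
qed

lemma is_join_of_relabel:
  assumes "fin_jsl S join bt" "Y \<subseteq> S" "j \<in> S"
  shows "is_join_of (e ` S) (relabel_join S e join) (e ` Y) (e j) \<longleftrightarrow> is_join_of S join Y j"
  using assms jsl_le_relabel[OF assms(1)] inj
  by (auto simp: is_join_of_def subset_eq inj_on_image_mem_iff)

lemma join_irreducibles_relabel:
  assumes "fin_jsl S join bt"
  shows "join_irreducibles (e ` S) (relabel_join S e join) (e bt) = e ` join_irreducibles S join bt"
proof -
  have "e j \<in> join_irreducibles (e ` S) (relabel_join S e join) (e bt) \<longleftrightarrow>
        j \<in> join_irreducibles S join bt" if j: "j \<in> S" for j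
  proof -
    have bt: "bt \<in> S" using assms by (simp add: fin_jsl_def)
    have "(\<forall>X. X \<subseteq> e ` S \<and> is_join_of (e ` S) (relabel_join S e join) X (e j) \<longrightarrow> e j \<in> X)
        \<longleftrightarrow> (\<forall>Y. Y \<subseteq> S \<and> is_join_of S join Y j \<longrightarrow> j \<in> Y)"
    proof safe
      fix Y assume "\<forall>X. X \<subseteq> e ` S \<and> is_join_of (e ` S) (relabel_join S e join) X (e j) \<longrightarrow> e j \<in> X"
        and Y: "Y \<subseteq> S" "is_join_of S join Y j"
      then have "e j \<in> e ` Y" using is_join_of_relabel[OF assms Y(1) j] by blast
      then show "j \<in> Y" using inj Y(1) j by (simp add: inj_on_image_mem_iff)
    next
      fix X assume "\<forall>Y. Y \<subseteq> S \<and> is_join_of S join Y j \<longrightarrow> j \<in> Y"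
        and X: "X \<subseteq> e ` S" "is_join_of (e ` S) (relabel_join S e join) X (e j)"
      moreover obtain Y where "Y \<subseteq> S" "X = e ` Y" using X(1) by (auto simp: subset_image_iff)
      ultimately show "e j \<in> X" using is_join_of_relabel[OF assms _ j] by blast
    qed
    then show ?thesis
      using j bt inj by (simp add: join_irreducibles_def inj_on_eq_iff)
  qed
  moreover have "join_irreducibles S join bt \<subseteq> S"
    and "join_irreducibles (e ` S) (relabel_join S e join) (e bt) \<subseteq> e ` S"
    by (auto simp: join_irreducibles_def)
  ultimately show ?thesis
    by blast
qed

lemma degree_relabel:
  "fin_jsl S join bt \<Longrightarrow> degree (e ` S) (relabel_join S e join) (e bt) = degree S join bt"
  unfolding degree_def join_irreducibles_relabel
  by (rule card_image) (auto simp: join_irreducibles_def intro: inj_on_subset[OF inj])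

end

lemma ex_nat_extension_degree_le:
  assumes "regular L"
  shows "\<exists>(S :: nat set) join bt (\<rho> :: 'a list \<Rightarrow> nat \<Rightarrow> nat).
           bool_rep S join bt \<rho> \<and> extends_canon L S join bt \<rho> \<and> degree S join bt \<le> ns L"
proof -
  obtain Q :: "nat set" and T I F where nfa: "is_nfa Q T I F" "card Q = ns L" "nfa_lang T I F = L"
    using ns_attained[OF assms] by blast
  let ?SL = "state_lang_unions T F Q"
  have rep: "bool_rep ?SL (\<union>) {} lderiv"
    using nfa(1) by (rule bool_rep_state_lang_unions)
  have ext: "extends_canon L ?SL (\<union>) {} lderiv"
    using LQ_subset_state_lang_unions[OF nfa(1)] nfa(3) by (simp add: extends_canon_lderiv)
  have deg: "degree ?SL (\<union>) {} \<le> ns L"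
    using degree_state_lang_unions[OF nfa(1)] nfa(2) by simp
  obtain e :: "'a list set \<Rightarrow> nat" where e: "inj_on e ?SL"
    using finite_state_lang_unions[OF nfa(1)] finite_imp_inj_to_nat_seg by blast
  have "fin_jsl ?SL (\<union>) {}" using rep by (simp add: bool_rep_def)
  then show ?thesis
    using bool_rep_relabel[OF e rep] extends_canon_relabel[OF e ext] degree_relabel[OF e] deg
    by fastforce
qed

theorem theorem4p6:
  fixes L :: "('a::finite) list set"
  assumes "regular L"
  shows "(\<forall>(S::'b set) join bt (\<rho>::'a list \<Rightarrow> 'b \<Rightarrow> 'b).
            bool_rep S join bt \<rho> \<and> extends_canon L S join bt \<rho> \<longrightarrow> ns L \<le> degree S join bt)
       \<and> (\<exists>(S::nat set) join bt (\<rho>::'a list \<Rightarrow> nat \<Rightarrow> nat).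
            bool_rep S join bt \<rho> \<and> extends_canon L S join bt \<rho> \<and> degree S join bt = ns L)"
proof (intro conjI allI impI)
  fix S :: "'b set" and join bt and \<rho> :: "'a list \<Rightarrow> 'b \<Rightarrow> 'b"
  assume "bool_rep S join bt \<rho> \<and> extends_canon L S join bt \<rho>"
  then show "ns L \<le> degree S join bt"
    by (elim conjE) (rule ns_le_degree_of_extension[OF assms])
next
  obtain S :: "nat set" and join bt and \<rho> :: "'a list \<Rightarrow> nat \<Rightarrow> nat"
    where rep: "bool_rep S join bt \<rho>" and ext: "extends_canon L S join bt \<rho>"
      and "degree S join bt \<le> ns L"
    using ex_nat_extension_degree_le[OF assms] by blast
  moreover have "ns L \<le> degree S join bt"
    using ns_le_degree_of_extension[OF assms rep ext] .
  ultimately show "\<exists>(S::nat set) join bt (\<rho>::'a list \<Rightarrow> nat \<Rightarrow> nat).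
      bool_rep S join bt \<rho> \<and> extends_canon L S join bt \<rho> \<and> degree S join bt = ns L"
    by (intro exI conjI) auto
qed

end
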